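(* For every vertex $v$ of $K$ and every $n\in\mathbb N$, $$B(\omega(v),2n-2,\omega(K))\subset \omega(B(v,n,K))\subset B(\omega(v),2n+2,\omega(K)).$$
   Context: $K$ is the pentagonal combinatorial tiling: a 2-dimensional CW-complex homeomorphic to the open disk, obtained as follows. The subdivision rule $\omega$ acts on a pentagon with boundary vertices $v_1,\dots,v_5$ in cyclic order (indices mod 5): add a vertex $m_i$ inside each edge $v_iv_{i+1}$, interior vertices $c_1,\dots,c_5$, edges $c_ic_{i+1}$ and $c_im_i$, and replace the face by the central pentagon $c_1\cdots c_5$ and petals $v_i\,m_i\,c_i\,c_{i-1}\,m_{i-1}$. $K_0$ is one pentagon, $K_n=\omega^n(K_0)$, $K_n$ embeds onto the central superpentagon $\omega^n(\text{central face of }\omega(K_0))$ of $K_{n+1}$, and $K$ is the direct limit. $\omega(K)$ is the complex on the same space obtained by applying $\omega$ to every face of $K$; for a subcomplex $P$, $\omega(P)$ is the union of the subdivisions of its faces, a subcomplex of $\omega(K)$; a vertex $v$ of $K$ is also a vertex $\omega(v)$ of $\omega(K)$. For a complex $L$, $B(v,n,L)$ is the subcomplex consisting of the faces all of whose vertices are at edge-path distance at most $n$ from $v$, with their edges and vertices. *)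

theory Defs
  imports "HOL-Library.FSet"
begin

(* Base j i : i-th corner of the level-j superpentagon F_j.
   Mid e, Cen F e : vertices created while building K (midpoint of edge e,
   interior vertex of face F adjacent to the midpoint of edge e).
   OMid e, OCen F e : the new vertices created by omega(K). *)
datatype vname = Base nat nat
  | Mid "vname fset" | Cen "vname fset" "vname fset"
  | OMid "vname fset" | OCen "vname fset" "vname fset"

(* a face is the cyclic list [v1,...,v5] of its boundary vertices *)
type_synonym face = "vname list"

definition subdiv ::
  "(vname fset \<Rightarrow> vname) \<Rightarrow> (vname fset \<Rightarrow> vname fset \<Rightarrow> vname) \<Rightarrow> face \<Rightarrow> face set" where
  "subdiv mid cen f =
    (let v = (\<lambda>i. f ! (i mod 5));
         e = (\<lambda>i. {|v i, v (i + 1)|});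
         F = fset_of_list f;
         m = (\<lambda>i. mid (e i));
         c = (\<lambda>i. cen F (e i))
     in insert [c 0, c 1, c 2, c 3, c 4]
          ((\<lambda>i. [v i, m i, c i, c (i + 4), m (i + 4)]) ` {0..<5}))"

definition top :: "nat \<Rightarrow> face" where
  "top j = [Base j 0, Base j 1, Base j 2, Base j 3, Base j 4]"

(* naming of interior vertices while building K: the central face of
   omega(F_j) (j >= 1) is named F_(j-1), so that K_(j-1) literally sits inside K_j *)
definition kcen :: "vname fset \<Rightarrow> vname fset \<Rightarrow> vname" where
  "kcen F e =
    (if \<exists>j i. 1 \<le> j \<and> i < 5 \<and> F = fset_of_list (top j) \<and> e = {|Base j i, Base j (Suc i mod 5)|}
     then (THE x. \<exists>j i. 1 \<le> j \<and> i < 5 \<and> F = fset_of_list (top j)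
                    \<and> e = {|Base j i, Base j (Suc i mod 5)|} \<and> x = Base (j - 1) i)
     else Cen F e)"

definition omegaK :: "face set \<Rightarrow> face set" where
  "omegaK S = (\<Union>f\<in>S. subdiv Mid kcen f)"

(* K_k = omega^k (F_k);  K_(k-1) is the central superpentagon omega^(k-1)(F_(k-1)) of K_k *)
definition Kn :: "nat \<Rightarrow> face set" where
  "Kn k = (omegaK ^^ k) {top k}"

(* the pentagonal tiling K: direct limit (here: union) of the K_k *)
definition K :: "face set" where
  "K = (\<Union>k. Kn k)"

(* omega(P) for a subcomplex P of K (a set of faces of K): faces of omega(K);
   a vertex v of K is the vertex v of omega(K) *)
definition omega :: "face set \<Rightarrow> face set" where
  "omega P = (\<Union>f\<in>P. subdiv OMid OCen f)"

definition verts :: "face set \<Rightarrow> vname set" where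
  "verts S = (\<Union>f\<in>S. set f)"

definition edges :: "face set \<Rightarrow> (vname \<times> vname) set" where
  "edges S = {(x, y). \<exists>f\<in>S. \<exists>i<length f.
      {x, y} = {f ! i, f ! (Suc i mod length f)}}"

definition within :: "face set \<Rightarrow> nat \<Rightarrow> vname \<Rightarrow> vname \<Rightarrow> bool" where
  "within S r x y = (\<exists>k\<le>r. (x, y) \<in> edges S ^^ k)"

definition ball :: "vname \<Rightarrow> nat \<Rightarrow> face set \<Rightarrow> face set" where
  "ball v r S = {f \<in> S. \<forall>x\<in>set f. within S r v x}"

end

theory Submission
  imports Defs
begin

text \<open>
  Every edge of \<open>K\<close> is split into two edges of \<open>\<omega>(K)\<close>, so distances at most double, and
  every vertex of \<open>\<omega>(f)\<close> is within distance 2 of a corner of \<open>f\<close>; this gives the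
  inclusion with radius \<open>2n + 2\<close>.

  For the other inclusion, each vertex \<open>x\<close> of \<open>\<omega>(K)\<close> is given \<^emph>\<open>anchors\<close>: vertices \<open>a\<close> of
  \<open>K\<close> near \<open>x\<close> together with a height \<open>h \<le> 4\<close>, chosen so that crossing one edge of
  \<open>\<omega>(K)\<close> increases \<open>h + 2 d\<^sub>K\<close> by at most one. Hence a vertex at distance \<open>k\<close> from
  \<open>v\<close> in \<open>\<omega>(K)\<close> has an anchor \<open>a\<close> with \<open>d\<^sub>K(v, a) \<le> (k - h) / 2\<close>. Each face of \<open>\<omega>(f)\<close>
  contains a new vertex all of whose anchors are corners of \<open>f\<close> of height at least 1, so
  some corner of \<open>f\<close> is at distance \<open>n - 2\<close> from \<open>v\<close>, and all of them at distance \<open>n\<close>.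
\<close>

section \<open>Edge-path distance\<close>

lemma edgesI: "f \<in> S \<Longrightarrow> i < length f \<Longrightarrow> (f ! i, f ! (Suc i mod length f)) \<in> edges S"
  unfolding edges_def by blast

lemma edges_sym: "(x, y) \<in> edges S \<Longrightarrow> (y, x) \<in> edges S"
  unfolding edges_def by (auto simp: insert_commute)

lemma within_refl: "within S r x x"
  unfolding within_def by auto

lemma within_mono: "within S r x y \<Longrightarrow> r \<le> s \<Longrightarrow> within S s x y"
  unfolding within_def using le_trans by blast

lemma within_edge: "(x, y) \<in> edges S \<Longrightarrow> within S 1 x y"
  unfolding within_def by (auto intro: exI[of _ 1])

lemma within_trans: "within S r x y \<Longrightarrow> within S s y z \<Longrightarrow> within S (r + s) x z"
  unfolding within_def by (metis add_le_mono relpow_add relcomp.relcompI)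

lemma edges_relpow_sym: "(x, y) \<in> edges S ^^ n \<Longrightarrow> (y, x) \<in> edges S ^^ n"
  by (induction n arbitrary: y) (auto, metis edges_sym relpow.simps(2) relpow_Suc_I2)

lemma within_sym: "within S r x y \<Longrightarrow> within S r y x"
  unfolding within_def using edges_relpow_sym by blast

lemma pentagon_face_within_2:
  assumes "f \<in> S" "length f = 5" "a \<in> set f" "b \<in> set f"
  shows "within S 2 a b"
proof -
  obtain a0 a1 a2 a3 a4 where f: "f = [a0, a1, a2, a3, a4]"
    using \<open>length f = 5\<close> by (simp add: length_Suc_conv numeral_eq_Suc) blast
  have "(a0, a1) \<in> edges S" "(a1, a2) \<in> edges S" "(a2, a3) \<in> edges S" "(a3, a4) \<in> edges S" "(a4, a0) \<in> edges S"
    using edgesI[OF \<open>f \<in> S\<close>, of 0] edgesI[OF \<open>f \<in> S\<close>, of 1] edgesI[OF \<open>f \<in> S\<close>, of 2]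
      edgesI[OF \<open>f \<in> S\<close>, of 3] edgesI[OF \<open>f \<in> S\<close>, of 4]
    by (simp_all add: f)
  then have W: "within S 1 a0 a1" "within S 1 a1 a2" "within S 1 a2 a3" "within S 1 a3 a4"
    "within S 1 a4 a0" "within S 1 a1 a0" "within S 1 a2 a1" "within S 1 a3 a2" "within S 1 a4 a3"
    "within S 1 a0 a4"
    by (metis within_edge edges_sym)+
  have one: "within S 2 x y" if "within S 1 x y" for x y
    using within_mono[OF that] by simp
  have two: "within S 2 x z" if "within S 1 x y" "within S 1 y z" for x y z
    using within_trans[OF that] by (simp add: numeral_2_eq_2)
  show ?thesis
    using assms(3,4) W unfolding f by (auto intro: within_refl one two)
qed

section \<open>The subdivision of a pentagon\<close>

text \<open>
  \<open>corner f i\<close> is \<open>v\<^sub>i\<close> and \<open>side f i\<close> the edge \<open>v\<^sub>i v\<^sub>i\<^sub>+\<^sub>1\<close> (indices mod 5); in the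
  subdivision, \<open>mid (side f i)\<close> is \<open>m\<^sub>i\<close> and \<open>cen (fset_of_list f) (side f i)\<close> is \<open>c\<^sub>i\<close>.
\<close>

definition corner :: "face \<Rightarrow> nat \<Rightarrow> vname" where
  "corner f i = f ! (i mod 5)"

definition side :: "face \<Rightarrow> nat \<Rightarrow> vname fset" where
  "side f i = {|corner f i, corner f (Suc i)|}"

definition centre :: "(vname fset \<Rightarrow> vname fset \<Rightarrow> vname) \<Rightarrow> face \<Rightarrow> face" where
  "centre cen f = map (\<lambda>i. cen (fset_of_list f) (side f i)) [0..<5]"

definition petal ::
  "(vname fset \<Rightarrow> vname) \<Rightarrow> (vname fset \<Rightarrow> vname fset \<Rightarrow> vname) \<Rightarrow> face \<Rightarrow> nat \<Rightarrow> face" where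
  "petal mid cen f i = [corner f i, mid (side f i), cen (fset_of_list f) (side f i),
     cen (fset_of_list f) (side f (i + 4)), mid (side f (i + 4))]"

lemma subdiv_eq: "subdiv mid cen f = insert (centre cen f) (petal mid cen f ` {..<5})"
  by (simp add: subdiv_def centre_def petal_def side_def corner_def Let_def upt_rec
      numeral_2_eq_2 atLeast0LessThan)

lemma corner_cong_mod: "i mod 5 = j mod 5 \<Longrightarrow> corner f i = corner f j"
  by (simp add: corner_def)

lemma side_cong_mod: "i mod 5 = j mod 5 \<Longrightarrow> side f i = side f j"
  unfolding side_def by (metis corner_cong_mod mod_Suc_eq)

lemma petal_in_subdiv: "petal mid cen f i \<in> subdiv mid cen f"
proof -
  have "petal mid cen f i = petal mid cen f (i mod 5)"
    unfolding petal_def by (metis corner_cong_mod side_cong_mod mod_add_left_eq mod_mod_trivial)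
  then show ?thesis by (simp add: subdiv_eq)
qed

lemma length_subdiv: "g \<in> subdiv mid cen f \<Longrightarrow> length g = 5"
  by (auto simp: subdiv_eq centre_def petal_def)

lemma corner_in_set: "length f = 5 \<Longrightarrow> corner f i \<in> set f"
  by (simp add: corner_def)

fun omega_vertex :: "vname \<Rightarrow> bool" where
  "omega_vertex (OMid e) = True"
| "omega_vertex (OCen F e) = True"
| "omega_vertex _ = False"

lemma fset_of_list_top_inj: "fset_of_list (top j) = fset_of_list (top j') \<Longrightarrow> j = j'"
  by (metis fset_of_list_elem list.set_intros(1) top_def vname.inject(1) set_ConsD empty_iff empty_set)

lemma top_side_inj:
  assumes "i < 5" "i' < 5" "{|Base j i, Base j (Suc i mod 5)|} = {|Base j i', Base j (Suc i' mod 5)|}"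
  shows "i = i'"
proof -
  have "Base j i |\<in>| {|Base j i', Base j (Suc i' mod 5)|}" "Base j i' |\<in>| {|Base j i, Base j (Suc i mod 5)|}"
    using assms(3) by (metis finsertI1)+
  then have "i = i' \<or> i = Suc i' mod 5" "i' = i \<or> i' = Suc i mod 5"
    by auto
  then show ?thesis
    using assms(1,2) by (auto simp: mod_Suc split: if_splits)
qed

lemma kcen_top:
  assumes "1 \<le> j" "i < 5"
  shows "kcen (fset_of_list (top j)) {|Base j i, Base j (Suc i mod 5)|} = Base (j - 1) i"
proof -
  let ?F = "fset_of_list (top j)" and ?e = "{|Base j i, Base j (Suc i mod 5)|}"
  have "(THE x. \<exists>j' i'. 1 \<le> j' \<and> i' < 5 \<and> ?F = fset_of_list (top j')
           \<and> ?e = {|Base j' i', Base j' (Suc i' mod 5)|} \<and> x = Base (j' - 1) i') = Base (j - 1) i"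
  proof (rule the_equality)
    fix x
    assume "\<exists>j' i'. 1 \<le> j' \<and> i' < 5 \<and> ?F = fset_of_list (top j')
           \<and> ?e = {|Base j' i', Base j' (Suc i' mod 5)|} \<and> x = Base (j' - 1) i'"
    then obtain j' i' where "i' < 5" "?F = fset_of_list (top j')"
      "?e = {|Base j' i', Base j' (Suc i' mod 5)|}" "x = Base (j' - 1) i'"
      by blast
    then show "x = Base (j - 1) i"
      using assms(2) fset_of_list_top_inj top_side_inj by metis
  qed (use assms in blast)
  then show ?thesis
    using assms unfolding kcen_def by auto
qed

lemma kcen_not_omega_vertex: "\<not> omega_vertex (kcen F e)"
proof (cases "\<exists>j i. 1 \<le> j \<and> i < 5 \<and> F = fset_of_list (top j) \<and> e = {|Base j i, Base j (Suc i mod 5)|}")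
  case True
  then show ?thesis using kcen_top by auto
next
  case False
  then have "kcen F e = Cen F e"
    unfolding kcen_def by (simp only: if_False)
  then show ?thesis by simp
qed

definition old_pentagon :: "face \<Rightarrow> bool" where
  "old_pentagon f \<longleftrightarrow> length f = 5 \<and> (\<forall>x\<in>set f. \<not> omega_vertex x)"

lemma old_pentagon_subdiv:
  assumes "old_pentagon f" "g \<in> subdiv Mid kcen f"
  shows "old_pentagon g"
proof -
  have "\<not> omega_vertex (corner f i)" for i
    using assms(1) corner_in_set unfolding old_pentagon_def by blast
  then show ?thesis
    using assms(2) by (auto simp: old_pentagon_def subdiv_eq centre_def petal_def kcen_not_omega_vertex)
qed

lemma old_pentagon_omegaK_funpow:
  "\<forall>f\<in>S. old_pentagon f \<Longrightarrow> \<forall>f\<in>(omegaK ^^ k) S. old_pentagon f"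
  by (induction k) (auto simp: omegaK_def intro: old_pentagon_subdiv)

lemma old_pentagon_K: "f \<in> K \<Longrightarrow> old_pentagon f"
  unfolding K_def Kn_def
  using old_pentagon_omegaK_funpow[of "{top _}"] by (auto simp: old_pentagon_def top_def)

lemma length_K_face: "f \<in> K \<Longrightarrow> length f = 5"
  using old_pentagon_K old_pentagon_def by blast

lemma verts_K_not_omega_vertex: "v \<in> verts K \<Longrightarrow> \<not> omega_vertex v"
  using old_pentagon_K unfolding verts_def old_pentagon_def by blast

lemma K_face_within_2: "f \<in> K \<Longrightarrow> a \<in> set f \<Longrightarrow> b \<in> set f \<Longrightarrow> within K 2 a b"
  using pentagon_face_within_2 length_K_face by blast

lemma K_corner_edge: "f \<in> K \<Longrightarrow> (corner f i, corner f (Suc i)) \<in> edges K"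
  using edgesI[of f K "i mod 5"] by (simp add: length_K_face corner_def mod_Suc_eq)

lemma edges_K_corners:
  assumes "(a, b) \<in> edges K"
  obtains f i where "f \<in> K" "{a, b} = {corner f i, corner f (Suc i)}"
proof -
  from assms obtain f i where "f \<in> K" "i < length f" "{a, b} = {f ! i, f ! (Suc i mod length f)}"
    unfolding edges_def by blast
  then show thesis
    using that[of f i] by (simp add: length_K_face corner_def)
qed

lemma omega_K_iff: "g \<in> omega K \<longleftrightarrow> (\<exists>f\<in>K. g \<in> subdiv OMid OCen f)"
  by (simp add: omega_def)

lemma edges_omega_K_subdiv:
  assumes "(x, y) \<in> edges (omega K)"
  obtains f g j where "f \<in> K" "g \<in> subdiv OMid OCen f" "j < 5" "{x, y} = {g ! j, g ! (Suc j mod 5)}"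
proof -
  from assms obtain g j where g: "g \<in> omega K" "j < length g" "{x, y} = {g ! j, g ! (Suc j mod length g)}"
    unfolding edges_def by blast
  moreover from g(1) obtain f where "f \<in> K" "g \<in> subdiv OMid OCen f"
    unfolding omega_K_iff by blast
  ultimately show thesis
    using that length_subdiv by metis
qed

section \<open>The outer inclusion\<close>

lemma K_edge_within_omega: "(a, b) \<in> edges K \<Longrightarrow> within (omega K) 2 a b"
proof -
  assume "(a, b) \<in> edges K"
  then obtain f i where f: "f \<in> K" and ab: "{a, b} = {corner f i, corner f (Suc i)}"
    by (rule edges_K_corners)
  let ?m = "OMid (side f i)"
  have petals: "petal OMid OCen f i \<in> omega K" "petal OMid OCen f (Suc i) \<in> omega K"
    using f petal_in_subdiv unfolding omega_K_iff by blast+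
  have "(corner f i, ?m) \<in> edges (omega K)"
    using edgesI[OF petals(1), of 0] by (simp add: petal_def)
  moreover have "(?m, corner f (Suc i)) \<in> edges (omega K)"
    using edgesI[OF petals(2), of 4] side_cong_mod[of "Suc i + 4" i f] by (simp add: petal_def)
  ultimately have "within (omega K) (1 + 1) (corner f i) (corner f (Suc i))"
    by (blast intro: within_trans within_edge)
  then show ?thesis
    using ab by (auto simp: doubleton_eq_iff numeral_2_eq_2 intro: within_sym)
qed

lemma within_K_within_omega: "within K r a b \<Longrightarrow> within (omega K) (2 * r) a b"
proof -
  have "within (omega K) (2 * k) a b" if "(a, b) \<in> edges K ^^ k" for k b
    using that
  proof (induction k arbitrary: b)
    case 0
    then show ?case by (simp add: within_refl)
  next
    case (Suc k)
    then obtain c where "(a, c) \<in> edges K ^^ k" "(c, b) \<in> edges K"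
      by auto
    then show ?case
      using within_trans[OF Suc.IH K_edge_within_omega] by simp
  qed
  then show "within K r a b \<Longrightarrow> within (omega K) (2 * r) a b"
    unfolding within_def[of K] by (meson mult_le_mono2 within_mono)
qed

lemma subdiv_vertex_near_corner:
  assumes "f \<in> K" "g \<in> subdiv OMid OCen f" "x \<in> set g"
  shows "\<exists>a\<in>set f. within (omega K) 2 a x"
proof -
  obtain i where x: "x \<in> set (petal OMid OCen f i)"
    using assms(2,3) by (auto simp: subdiv_eq centre_def petal_def) blast
  have "petal OMid OCen f i \<in> omega K"
    using assms(1) petal_in_subdiv unfolding omega_K_iff by blast
  then have "within (omega K) 2 (corner f i) x"
    using pentagon_face_within_2 x by (fastforce simp: petal_def)
  then show ?thesis
    using corner_in_set length_K_face[OF assms(1)] by blast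
qed

lemma omega_ball_subset_ball: "omega (ball v n K) \<subseteq> ball v (2 * n + 2) (omega K)"
proof
  fix g
  assume "g \<in> omega (ball v n K)"
  then obtain f where f: "f \<in> K" "\<forall>a\<in>set f. within K n v a" and g: "g \<in> subdiv OMid OCen f"
    unfolding omega_def ball_def by blast
  have "within (omega K) (2 * n + 2) v x" if x: "x \<in> set g" for x
  proof -
    obtain a where "a \<in> set f" "within (omega K) 2 a x"
      using subdiv_vertex_near_corner f(1) g x by blast
    then show ?thesis
      using within_trans within_K_within_omega f(2) by blast
  qed
  moreover have "g \<in> omega K"
    using f(1) g unfolding omega_K_iff by blast
  ultimately show "g \<in> ball v (2 * n + 2) (omega K)"
    unfolding ball_def by blast
qed

section \<open>Anchors and the inner inclusion\<close>

text \<open>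
  \<open>anchor x h a\<close>: the vertex \<open>x\<close> of \<open>\<omega>(K)\<close> lies at most \<open>h\<close> steps away from the vertex
  \<open>a\<close> of \<open>K\<close>, inside the subdivision of a face containing \<open>a\<close>.
\<close>

inductive anchor :: "vname \<Rightarrow> nat \<Rightarrow> vname \<Rightarrow> bool" where
  old: "\<not> omega_vertex a \<Longrightarrow> anchor a 0 a"
| mid: "a |\<in>| e \<Longrightarrow> anchor (OMid e) 1 a"
| cen_side: "a |\<in>| e \<Longrightarrow> anchor (OCen F e) 2 a"
| cen_near_side: "a |\<in>| F \<Longrightarrow> b |\<in>| e \<Longrightarrow> (a, b) \<in> edges K \<Longrightarrow> anchor (OCen F e) 3 a"
| cen_face: "a |\<in>| F \<Longrightarrow> anchor (OCen F e) 4 a"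

definition anchored_within :: "vname \<Rightarrow> nat \<Rightarrow> vname \<Rightarrow> bool" where
  "anchored_within v k x \<longleftrightarrow> (\<exists>h a. anchor x h a \<and> h \<le> k \<and> within K ((k - h) div 2) v a)"

definition anchor_link :: "vname \<Rightarrow> vname \<Rightarrow> bool" where
  "anchor_link x y \<longleftrightarrow>
     (\<forall>h a. anchor x h a \<longrightarrow> (\<exists>h' a' d. anchor y h' a' \<and> within K d a a' \<and> h' + 2 * d \<le> Suc h))"

lemma anchored_within_link:
  assumes "anchored_within v k x" "anchor_link x y"
  shows "anchored_within v (Suc k) y"
proof -
  obtain h a where a: "anchor x h a" "h \<le> k" "within K ((k - h) div 2) v a"
    using assms(1) unfolding anchored_within_def by blast
  then obtain h' a' d where a': "anchor y h' a'" "within K d a a'" "h' + 2 * d \<le> Suc h"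
    using assms(2) unfolding anchor_link_def by blast
  have "within K ((k - h) div 2 + d) v a'"
    using within_trans a(3) a'(2) by blast
  moreover have "(k - h) div 2 + d \<le> (Suc k - h') div 2"
    using a(2) a'(3) by linarith
  ultimately have "within K ((Suc k - h') div 2) v a'"
    by (rule within_mono)
  moreover have "h' \<le> Suc k"
    using a(2) a'(3) by linarith
  ultimately show ?thesis
    using a'(1) unfolding anchored_within_def by blast
qed

lemma anchor_linkI:
  "(\<And>h a. anchor x h a \<Longrightarrow> \<exists>h' a' d. anchor y h' a' \<and> within K d a a' \<and> h' + 2 * d \<le> Suc h)
    \<Longrightarrow> anchor_link x y"
  unfolding anchor_link_def by blast

lemma anchor_old_iff: "\<not> omega_vertex a \<Longrightarrow> anchor a h b \<longleftrightarrow> h = 0 \<and> b = a"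
  by (auto elim: anchor.cases intro: anchor.old)

lemma anchor_link_old_mid:
  assumes "\<not> omega_vertex a" "a |\<in>| e"
  shows "anchor_link a (OMid e)"
proof (rule anchor_linkI)
  fix h c
  assume "anchor a h c"
  then have "c = a"
    using assms(1) anchor_old_iff by blast
  moreover have "anchor (OMid e) 1 a"
    using assms(2) by (rule anchor.mid)
  ultimately show "\<exists>h' a' d. anchor (OMid e) h' a' \<and> within K d c a' \<and> h' + 2 * d \<le> Suc h"
    using within_refl[of K 0 a] by fastforce
qed

lemma anchor_link_mid_old:
  assumes "\<not> omega_vertex a" "(b, a) \<in> edges K"
  shows "anchor_link (OMid {|a, b|}) a"
proof (rule anchor_linkI)
  fix h c
  assume "anchor (OMid {|a, b|}) h c"
  then have "h = 1" "c = a \<or> c = b"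
    by (auto elim: anchor.cases)
  moreover have "within K 1 c a" if "c = b"
    using assms(2) that within_edge by blast
  ultimately show "\<exists>h' a' d. anchor a h' a' \<and> within K d c a' \<and> h' + 2 * d \<le> Suc h"
    using assms(1) anchor.old within_refl[of K 0 a] by fastforce
qed

lemma anchor_link_mid_cen: "anchor_link (OMid e) (OCen F e)"
proof (rule anchor_linkI)
  fix h a
  assume "anchor (OMid e) h a"
  then have "h = 1" "a |\<in>| e"
    by (auto elim: anchor.cases)
  then show "\<exists>h' a' d. anchor (OCen F e) h' a' \<and> within K d a a' \<and> h' + 2 * d \<le> Suc h"
    using anchor.cen_side within_refl[of K 0 a] by fastforce
qed

lemma anchor_link_cen_mid:
  assumes "\<forall>a. a |\<in>| F \<longrightarrow> (\<exists>b. b |\<in>| e \<and> within K 2 a b)"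
  shows "anchor_link (OCen F e) (OMid e)"
proof (rule anchor_linkI)
  fix h a
  assume "anchor (OCen F e) h a"
  then show "\<exists>h' a' d. anchor (OMid e) h' a' \<and> within K d a a' \<and> h' + 2 * d \<le> Suc h"
  proof cases
    case old
    then show ?thesis by simp
  next
    case cen_side
    then have "anchor (OMid e) 1 a \<and> within K 0 a a \<and> 1 + 2 * 0 \<le> Suc h"
      using anchor.mid[of a e] within_refl[of K 0 a] by auto
    then show ?thesis by blast
  next
    case (cen_near_side b)
    then have "anchor (OMid e) 1 b \<and> within K 1 a b \<and> 1 + 2 * 1 \<le> Suc h"
      using anchor.mid[of b e] within_edge[of a b K] by auto
    then show ?thesis by blast
  next
    case cen_face
    then obtain b where "b |\<in>| e" "within K 2 a b"
      using assms by blast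
    then have "anchor (OMid e) 1 b \<and> within K 2 a b \<and> 1 + 2 * 2 \<le> Suc h"
      using cen_face anchor.mid[of b e] by auto
    then show ?thesis by blast
  qed
qed

lemma anchor_link_cen_cen:
  assumes "\<forall>a. a |\<in>| e \<longrightarrow> a |\<in>| e' \<or> (a |\<in>| F \<and> (\<exists>b. b |\<in>| e' \<and> (a, b) \<in> edges K))"
  shows "anchor_link (OCen F e) (OCen F e')"
proof (rule anchor_linkI)
  fix h a
  assume "anchor (OCen F e) h a"
  then have "\<exists>h'. anchor (OCen F e') h' a \<and> h' \<le> Suc h"
  proof cases
    case old
    then show ?thesis by simp
  next
    case cen_side
    then consider "a |\<in>| e'" | b where "a |\<in>| F" "b |\<in>| e'" "(a, b) \<in> edges K"
      using assms by blast
    then show ?thesis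
    proof cases
      case 1
      then have "anchor (OCen F e') 2 a"
        by (rule anchor.cen_side)
      then show ?thesis using cen_side by auto
    next
      case 2
      then have "anchor (OCen F e') 3 a"
        by (rule anchor.cen_near_side)
      then show ?thesis using cen_side by auto
    qed
  next
    case cen_near_side
    then show ?thesis using anchor.cen_face[of a F e'] by auto
  next
    case cen_face
    then show ?thesis using anchor.cen_face[of a F e'] by auto
  qed
  then show "\<exists>h' a' d. anchor (OCen F e') h' a' \<and> within K d a a' \<and> h' + 2 * d \<le> Suc h"
    using within_refl[of K 0 a] by fastforce
qed

lemma subdiv_edge_anchor_link:
  assumes f: "f \<in> K" and g: "g \<in> subdiv OMid OCen f" and j: "j < 5"
  shows "anchor_link (g ! j) (g ! (Suc j mod 5)) \<and> anchor_link (g ! (Suc j mod 5)) (g ! j)"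
proof -
  let ?c = "corner f" and ?F = "fset_of_list f"
  have old: "\<not> omega_vertex (?c i)" for i
    using old_pentagon_K[OF f] corner_in_set length_K_face[OF f] unfolding old_pentagon_def by blast
  have edge: "(?c i, ?c (Suc i)) \<in> edges K" "(?c (Suc i), ?c i) \<in> edges K" for i
    using K_corner_edge[OF f] edges_sym by blast+
  have in_F: "?c i |\<in>| ?F" for i
    using corner_in_set length_K_face[OF f] by (simp add: fset_of_list_elem)
  have wrap: "?c (Suc (i + 4)) = ?c i" for i
    by (rule corner_cong_mod) simp
  have side_prev: "side f (i + 4) = {|?c i, ?c (i + 4)|}" for i
    unfolding side_def wrap by (rule finsert_commute)
  have near: "\<forall>a. a |\<in>| ?F \<longrightarrow> (\<exists>b. b |\<in>| side f i \<and> within K 2 a b)" for i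
    using K_face_within_2[OF f] corner_in_set[OF length_K_face[OF f]]
    by (auto simp: side_def fset_of_list_elem)
  have mid: "anchor_link (OMid (side f i)) (OCen ?F (side f i))"
    "anchor_link (OCen ?F (side f i)) (OMid (side f i))" for i
    using anchor_link_mid_cen anchor_link_cen_mid[OF near] by blast+
  have cen: "anchor_link (OCen ?F (side f i)) (OCen ?F (side f (Suc i)))"
    "anchor_link (OCen ?F (side f (Suc i))) (OCen ?F (side f i))" for i
    by (rule anchor_link_cen_cen; auto simp: side_def intro: in_F edge)+
  from g consider "g = centre OCen f" | i where "g = petal OMid OCen f i"
    by (auto simp: subdiv_eq)
  then show ?thesis
  proof cases
    case 1
    have "g ! j = OCen ?F (side f j)" "g ! (Suc j mod 5) = OCen ?F (side f (Suc j))"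
      using j side_cong_mod[of "Suc j mod 5" "Suc j" f] by (simp_all add: 1 centre_def)
    then show ?thesis
      using cen by simp
  next
    case (2 i)
    have edge_prev: "(?c (i + 4), ?c i) \<in> edges K"
      using edge(1)[of "i + 4"] unfolding wrap .
    have corner_links: "anchor_link (?c i) (OMid (side f i))" "anchor_link (OMid (side f i)) (?c i)"
      "anchor_link (?c i) (OMid (side f (i + 4)))" "anchor_link (OMid (side f (i + 4))) (?c i)"
      unfolding side_prev
      by (auto simp: side_def intro: anchor_link_old_mid[OF old] anchor_link_mid_old[OF old]
          edge(2) edge_prev)
    have "side f (Suc (i + 4)) = side f i"
      by (rule side_cong_mod) simp
    then have cen_links: "anchor_link (OCen ?F (side f i)) (OCen ?F (side f (i + 4)))"
      "anchor_link (OCen ?F (side f (i + 4))) (OCen ?F (side f i))"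
      using cen[of "i + 4"] by simp_all
    from j consider "j = 0" | "j = 1" | "j = 2" | "j = 3" | "j = 4"
      by linarith
    then show ?thesis
      using corner_links mid cen_links by cases (simp_all add: 2 petal_def)
  qed
qed

lemma anchored_within_omega_edge:
  assumes "anchored_within v k x" "(x, y) \<in> edges (omega K)"
  shows "anchored_within v (Suc k) y"
proof -
  obtain f g j where "f \<in> K" "g \<in> subdiv OMid OCen f" "j < 5" "{x, y} = {g ! j, g ! (Suc j mod 5)}"
    using assms(2) by (rule edges_omega_K_subdiv)
  then have "anchor_link x y"
    using subdiv_edge_anchor_link by (auto simp: doubleton_eq_iff)
  then show ?thesis
    using anchored_within_link assms(1) by blast
qed

lemma anchored_within_mono: "anchored_within v k x \<Longrightarrow> k \<le> r \<Longrightarrow> anchored_within v r x"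
  unfolding anchored_within_def by (meson diff_le_mono div_le_mono le_trans within_mono)

lemma within_omega_anchored:
  assumes "\<not> omega_vertex v" "within (omega K) r v x"
  shows "anchored_within v r x"
proof -
  have "anchored_within v k x" if "(v, x) \<in> edges (omega K) ^^ k" for k x
    using that
  proof (induction k arbitrary: x)
    case 0
    then show ?case
      using anchor.old[OF assms(1)] within_refl unfolding anchored_within_def by fastforce
  next
    case (Suc k)
    then obtain y where "(v, y) \<in> edges (omega K) ^^ k" "(y, x) \<in> edges (omega K)"
      by auto
    then show ?case
      using Suc.IH anchored_within_omega_edge by blast
  qed
  then show ?thesis
    using assms(2) anchored_within_mono unfolding within_def by blast
qed

lemma subdiv_has_omega_vertex:
  assumes "length f = 5" "g \<in> subdiv OMid OCen f"
  obtains x where "x \<in> set g" "\<And>h a. anchor x h a \<Longrightarrow> 1 \<le> h \<and> a \<in> set f"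
proof -
  have side_subset: "a \<in> set f" if "a |\<in>| side f i" for a i
    using that corner_in_set[OF assms(1)] by (auto simp: side_def)
  have anchors: "1 \<le> h \<and> a \<in> set f"
    if "x = OMid (side f i) \<or> x = OCen (fset_of_list f) (side f i)" "anchor x h a" for x h a i
    using that(2,1) by cases (auto simp: fset_of_list_elem side_subset)
  from assms(2) consider "g = centre OCen f" | i where "g = petal OMid OCen f i"
    by (auto simp: subdiv_eq)
  then show thesis
  proof cases
    case 1
    then have "OCen (fset_of_list f) (side f 0) \<in> set g"
      by (simp add: centre_def)
    then show thesis
      using that anchors by blast
  next
    case (2 i)
    then have "OMid (side f i) \<in> set g"
      by (simp add: petal_def)
    then show thesis
      using that anchors by blast
  qed
qed

lemma ball_omega_subset_omega_ball:
  assumes "v \<in> verts K"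
  shows "ball v (2 * n - 2) (omega K) \<subseteq> omega (ball v n K)"
proof
  fix g
  assume "g \<in> ball v (2 * n - 2) (omega K)"
  then obtain f where f: "f \<in> K" and g: "g \<in> subdiv OMid OCen f"
    and close: "\<forall>x\<in>set g. within (omega K) (2 * n - 2) v x"
    unfolding ball_def omega_K_iff by blast
  obtain x where x: "x \<in> set g" and x_anchors: "\<And>h a. anchor x h a \<Longrightarrow> 1 \<le> h \<and> a \<in> set f"
    using subdiv_has_omega_vertex[OF length_K_face[OF f] g] by blast
  have "anchored_within v (2 * n - 2) x"
    using within_omega_anchored verts_K_not_omega_vertex[OF assms] close x by blast
  then obtain h a where "anchor x h a" "h \<le> 2 * n - 2" "within K ((2 * n - 2 - h) div 2) v a"
    unfolding anchored_within_def by blast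
  moreover from this have "1 \<le> h" "a \<in> set f"
    using x_anchors by blast+
  ultimately have a: "a \<in> set f" "2 \<le> n" "within K (n - 2) v a"
    by (auto elim!: within_mono)
  have "within K (n - 2 + 2) v b" if "b \<in> set f" for b
    using within_trans a(3) K_face_within_2[OF f a(1) that] by blast
  then have "within K n v b" if "b \<in> set f" for b
    using that le_add_diff_inverse2[OF a(2)] by metis
  then show "g \<in> omega (ball v n K)"
    unfolding omega_def ball_def using f g by blast
qed

theorem lemmal:
  assumes "v \<in> verts K"
  shows "ball v (2 * n - 2) (omega K) \<subseteq> omega (ball v n K)
       \<and> omega (ball v n K) \<subseteq> ball v (2 * n + 2) (omega K)"
  using ball_omega_subset_omega_ball[OF assms] omega_ball_subset_ball by blast

end
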